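(* Let $\mathsf{CMP}$ be the set of linear processes $P$ that are complete, let $\mathsf{LF}$ be the set of lock-free processes, and let $\mathsf{PSL} = \{P \in \mathsf{CMP} \mid \mathrm{psl}(P)\}$ be the set of potentially self-locking complete processes (all notions as defined in the context). Then $$\mathsf{PSL} = \mathsf{CMP} \setminus \mathsf{LF}.$$
   Context: Fix a countable set $\mathcal{N}$ of names $a,b,\dots$ and a disjoint set $\overline{\mathcal{N}}$ of co-names with a bijection $a\mapsto \bar a$, extended by $\bar{\bar a}=a$; actions $\alpha$ range over $\mathcal{N}\cup\overline{\mathcal{N}}$. Processes are given by $P,Q,R ::= \mathbf{0} \mid \alpha.P \mid P \,|\, Q$ (finite CCS with prefix and parallel composition only). Evaluation contexts: $E ::= [-] \mid P\,|\,E \mid E\,|\,P$; process contexts: $C ::= [-] \mid P\,|\,C \mid C\,|\,P \mid \alpha.C$; $C[Q]$ denotes filling the hole with $Q$. Structural congruence $\equiv$ is the smallest congruence with $P|\mathbf{0}\equiv P$, $P|Q\equiv Q|P$, $P|(Q|R)\equiv (P|Q)|R$. Reduction $\to$ is the smallest relation with $a.P \,|\, \bar a.Q \to P\,|\,Q$, closed under evaluation contexts ($P\to P'$ implies $E[P]\to E[P']$) and under $\equiv$ ($P\equiv P'\to Q'\equiv Q$ implies $P\to Q$); $\to^*$ is its reflexive–transitive closure. A process is linear if no name occurs more than once as an input $a$ and no more than once as an output $\bar a$ (so each name occurs at most twice). Predicates: $\mathrm{in}(a,P)$ iff $\exists P',P''.\ P\equiv P'\,|\,a.P''$; $\mathrm{out}(a,P)$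 iff $\exists P',P''.\ P\equiv P'\,|\,\bar a.P''$; $\mathrm{sync}(a,P)$ iff $\mathrm{in}(a,P)$ and $\mathrm{out}(a,P)$; $\mathrm{wait}(a,P)$ iff exactly one of $\mathrm{in}(a,P)$, $\mathrm{out}(a,P)$ holds. Lock-freedom: $\mathrm{lf}(P)$ iff for all $Q$ and $a$, if $P\to^* Q$ and $\mathrm{wait}(a,Q)$ then there exists $R$ with $Q\to^* R$ and $\mathrm{sync}(a,R)$; $\mathsf{LF}=\{P\mid \mathrm{lf}(P)\}$. Completeness: $\mathrm{cin}(a,P)$ iff there exist a process context $C$ and $Q$ with $P\equiv C[Q]$ and $\mathrm{in}(a,Q)$; $\mathrm{cout}(a,P)$ likewise with $\mathrm{out}(a,Q)$; $\mathrm{complete}(P)$ iff for all $a$, $\mathrm{cin}(a,P) \Leftrightarrow \mathrm{cout}(a,P)$; $\mathsf{CMP}$ is the set of linear processes $P$ with $\mathrm{complete}(P)$. Deadlock: $\mathrm{dl}(P)$ iff there is no $Q$ with $P\to Q$ and $P\not\equiv\mathbf{0}$. Top-completeness: $\mathrm{tcomplete}(P)$ iff for all $a$, ($\mathrm{in}(a,P)$ implies $\mathrm{cout}(a,P)$) and ($\mathrm{out}(a,P)$ implies $\mathrm{cin}(a,P)$). Self-deadlock: $\mathrm{sdl}(P)$ iff $\mathrm{dl}(P)$ and $\mathrm{tcomplete}(P)$. Potential self-locking: $\mathrm{psl}(P)$ iff there exist an evaluation context $E$ and a process $Q$ with $P\to^* E[Q]$ and $\mathrm{sdl}(Q)$.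 *)

theory Defs
  imports Main
begin

datatype act = In nat | Out nat

fun co :: "act \<Rightarrow> act" where
  "co (In a) = Out a" | "co (Out a) = In a"

datatype proc = Nil | Pre act proc | Par proc proc

datatype ectx = EHole | EParL proc ectx | EParR ectx proc

fun efill :: "ectx \<Rightarrow> proc \<Rightarrow> proc" where
  "efill EHole Q = Q"
| "efill (EParL P E) Q = Par P (efill E Q)"
| "efill (EParR E P) Q = Par (efill E Q) P"

datatype pctx = CHole | CParL proc pctx | CParR pctx proc | CPre act pctx

fun cfill :: "pctx \<Rightarrow> proc \<Rightarrow> proc" where
  "cfill CHole Q = Q"
| "cfill (CParL P C) Q = Par P (cfill C Q)"
| "cfill (CParR C P) Q = Par (cfill C Q) P"
| "cfill (CPre \<alpha> C) Q = Pre \<alpha> (cfill C Q)"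

inductive scong :: "proc \<Rightarrow> proc \<Rightarrow> bool" (infix "\<equiv>\<^sub>s" 50) where
  par_nil: "Par P Nil \<equiv>\<^sub>s P"
| par_comm: "Par P Q \<equiv>\<^sub>s Par Q P"
| par_assoc: "Par P (Par Q R) \<equiv>\<^sub>s Par (Par P Q) R"
| refl: "P \<equiv>\<^sub>s P"
| sym: "P \<equiv>\<^sub>s Q \<Longrightarrow> Q \<equiv>\<^sub>s P"
| trans: "P \<equiv>\<^sub>s Q \<Longrightarrow> Q \<equiv>\<^sub>s R \<Longrightarrow> P \<equiv>\<^sub>s R"
| cong_pre: "P \<equiv>\<^sub>s Q \<Longrightarrow> Pre \<alpha> P \<equiv>\<^sub>s Pre \<alpha> Q"
| cong_par: "P \<equiv>\<^sub>s P' \<Longrightarrow> Q \<equiv>\<^sub>s Q' \<Longrightarrow> Par P Q \<equiv>\<^sub>s Par P' Q'"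

inductive red :: "proc \<Rightarrow> proc \<Rightarrow> bool" where
  comm: "red (Par (Pre (In a) P) (Pre (Out a) Q)) (Par P Q)"
| ectx: "red P P' \<Longrightarrow> red (efill E P) (efill E P')"
| struct: "P \<equiv>\<^sub>s P' \<Longrightarrow> red P' Q' \<Longrightarrow> Q' \<equiv>\<^sub>s Q \<Longrightarrow> red P Q"

abbreviation reds :: "proc \<Rightarrow> proc \<Rightarrow> bool" where
  "reds \<equiv> red\<^sup>*\<^sup>*"

fun occ :: "act \<Rightarrow> proc \<Rightarrow> nat" where
  "occ \<alpha> Nil = 0"
| "occ \<alpha> (Pre \<beta> P) = (if \<alpha> = \<beta> then 1 else 0) + occ \<alpha> P"
| "occ \<alpha> (Par P Q) = occ \<alpha> P + occ \<alpha> Q"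

definition linear :: "proc \<Rightarrow> bool" where
  "linear P \<longleftrightarrow> (\<forall>a. occ (In a) P \<le> 1 \<and> occ (Out a) P \<le> 1)"

definition inp :: "nat \<Rightarrow> proc \<Rightarrow> bool" where
  "inp a P \<longleftrightarrow> (\<exists>P' P''. P \<equiv>\<^sub>s Par P' (Pre (In a) P''))"

definition outp :: "nat \<Rightarrow> proc \<Rightarrow> bool" where
  "outp a P \<longleftrightarrow> (\<exists>P' P''. P \<equiv>\<^sub>s Par P' (Pre (Out a) P''))"

definition sync :: "nat \<Rightarrow> proc \<Rightarrow> bool" where
  "sync a P \<longleftrightarrow> inp a P \<and> outp a P"

definition wait :: "nat \<Rightarrow> proc \<Rightarrow> bool" where
  "wait a P \<longleftrightarrow> (inp a P \<noteq> outp a P)"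

definition lf :: "proc \<Rightarrow> bool" where
  "lf P \<longleftrightarrow> (\<forall>Q a. reds P Q \<and> wait a Q \<longrightarrow> (\<exists>R. reds Q R \<and> sync a R))"

definition LF :: "proc set" where
  "LF = {P. lf P}"

definition cin :: "nat \<Rightarrow> proc \<Rightarrow> bool" where
  "cin a P \<longleftrightarrow> (\<exists>C Q. P \<equiv>\<^sub>s cfill C Q \<and> inp a Q)"

definition cout :: "nat \<Rightarrow> proc \<Rightarrow> bool" where
  "cout a P \<longleftrightarrow> (\<exists>C Q. P \<equiv>\<^sub>s cfill C Q \<and> outp a Q)"

definition complete :: "proc \<Rightarrow> bool" where
  "complete P \<longleftrightarrow> (\<forall>a. cin a P \<longleftrightarrow> cout a P)"

definition CMP :: "proc set" where
  "CMP = {P. linear P \<and> complete P}"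

definition dl :: "proc \<Rightarrow> bool" where
  "dl P \<longleftrightarrow> \<not> (\<exists>Q. red P Q) \<and> \<not> (P \<equiv>\<^sub>s Nil)"

definition tcomplete :: "proc \<Rightarrow> bool" where
  "tcomplete P \<longleftrightarrow> (\<forall>a. (inp a P \<longrightarrow> cout a P) \<and> (outp a P \<longrightarrow> cin a P))"

definition sdl :: "proc \<Rightarrow> bool" where
  "sdl P \<longleftrightarrow> dl P \<and> tcomplete P"

definition psl :: "proc \<Rightarrow> bool" where
  "psl P \<longleftrightarrow> (\<exists>E Q. reds P (efill E Q) \<and> sdl Q)"

definition PSL :: "proc set" where
  "PSL = {P \<in> CMP. psl P}"

end

theory Submission
  imports Defs
begin

text \<open>
  A complete process that is not lock-free has a reachable state with a waiting action whose
  partner never surfaces; running such a state to a normal form keeps that action on top, and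
  completeness of the normal form makes it a self-deadlock.  Conversely, in a self-deadlock every
  top-level action has its partner only guarded, and by linearity all those partners are guarded
  by top-level actions of the same deadlock; this configuration is stable under reduction, so
  the waiting actions can never synchronise.
\<close>

declare scong.trans[trans]

lemma scong_par_Nil_left: "Par Nil P \<equiv>\<^sub>s P"
  by (meson scong.par_comm scong.par_nil scong.trans)

fun top_occ :: "act \<Rightarrow> proc \<Rightarrow> nat" where
  "top_occ \<alpha> Nil = 0"
| "top_occ \<alpha> (Pre \<beta> P) = (if \<alpha> = \<beta> then 1 else 0)"
| "top_occ \<alpha> (Par P Q) = top_occ \<alpha> P + top_occ \<alpha> Q"

fun guarded_occ :: "act set \<Rightarrow> act \<Rightarrow> proc \<Rightarrow> nat" where
  "guarded_occ G \<beta> Nil = 0"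
| "guarded_occ G \<beta> (Pre \<gamma> P) = (if \<gamma> \<in> G then occ \<beta> P else guarded_occ G \<beta> P)"
| "guarded_occ G \<beta> (Par P Q) = guarded_occ G \<beta> P + guarded_occ G \<beta> Q"

fun num_prefixes :: "proc \<Rightarrow> nat" where
  "num_prefixes Nil = 0"
| "num_prefixes (Pre \<alpha> P) = Suc (num_prefixes P)"
| "num_prefixes (Par P Q) = num_prefixes P + num_prefixes Q"

lemma scong_occ: "P \<equiv>\<^sub>s Q \<Longrightarrow> occ \<alpha> P = occ \<alpha> Q"
  by (induction rule: scong.induct) auto

lemma scong_top_occ: "P \<equiv>\<^sub>s Q \<Longrightarrow> top_occ \<alpha> P = top_occ \<alpha> Q"
  by (induction rule: scong.induct) auto

lemma scong_guarded_occ: "P \<equiv>\<^sub>s Q \<Longrightarrow> guarded_occ G \<beta> P = guarded_occ G \<beta> Q"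
  by (induction rule: scong.induct) (auto simp: scong_occ)

lemma scong_num_prefixes: "P \<equiv>\<^sub>s Q \<Longrightarrow> num_prefixes P = num_prefixes Q"
  by (induction rule: scong.induct) auto

lemma top_occ_le_occ: "top_occ \<alpha> P \<le> occ \<alpha> P"
  by (induction P) auto

lemma guarded_occ_le_occ: "guarded_occ G \<beta> P \<le> occ \<beta> P"
  by (induction P) auto

lemma top_occ_add_guarded_occ_le_occ: "top_occ \<beta> P + guarded_occ G \<beta> P \<le> occ \<beta> P"
  by (induction P) (auto simp: guarded_occ_le_occ)

lemma top_occ_add_guarded_occ_eq_occ:
  assumes "\<And>\<gamma>. top_occ \<gamma> P > 0 \<Longrightarrow> \<gamma> \<in> G"
  shows "top_occ \<beta> P + guarded_occ G \<beta> P = occ \<beta> P"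
  using assms
proof (induction P)
  case (Pre \<gamma> P)
  then have "\<gamma> \<in> G" by (metis top_occ.simps(2) zero_less_one)
  then show ?case by auto
qed auto

lemma scong_Nil_if_no_top_occ: "(\<And>\<alpha>. top_occ \<alpha> P = 0) \<Longrightarrow> P \<equiv>\<^sub>s Nil"
proof (induction P)
  case Nil then show ?case by (simp add: scong.refl)
next
  case (Pre \<beta> P) then show ?case by (metis top_occ.simps(2) one_neq_zero)
next
  case (Par P Q)
  then have "Par P Q \<equiv>\<^sub>s Par Nil Nil" by (simp add: scong.cong_par)
  also have "\<dots> \<equiv>\<^sub>s Nil" by (rule scong.par_nil)
  finally show ?case .
qed

lemma top_occ_split: "top_occ \<alpha> P > 0 \<Longrightarrow> \<exists>P' P''. P \<equiv>\<^sub>s Par P' (Pre \<alpha> P'')"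
proof (induction P)
  case (Pre \<beta> P)
  then show ?case using scong_par_Nil_left[of "Pre \<beta> P"] scong.sym by (auto split: if_splits)
next
  case (Par P Q)
  show ?case
  proof (cases "top_occ \<alpha> P > 0")
    case True
    then obtain A B where "P \<equiv>\<^sub>s Par A (Pre \<alpha> B)" using Par by blast
    then have "Par P Q \<equiv>\<^sub>s Par (Par A (Pre \<alpha> B)) Q" by (simp add: scong.cong_par scong.refl)
    also have "\<dots> \<equiv>\<^sub>s Par Q (Par A (Pre \<alpha> B))" by (rule scong.par_comm)
    also have "\<dots> \<equiv>\<^sub>s Par (Par Q A) (Pre \<alpha> B)" by (rule scong.par_assoc)
    finally show ?thesis by blast
  next
    case False
    then obtain A B where "Q \<equiv>\<^sub>s Par A (Pre \<alpha> B)" using Par by auto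
    then have "Par P Q \<equiv>\<^sub>s Par P (Par A (Pre \<alpha> B))" by (simp add: scong.cong_par scong.refl)
    also have "\<dots> \<equiv>\<^sub>s Par (Par P A) (Pre \<alpha> B)" by (rule scong.par_assoc)
    finally show ?thesis by blast
  qed
qed simp

lemma inp_iff_top_occ: "inp a P \<longleftrightarrow> top_occ (In a) P > 0"
  unfolding inp_def using top_occ_split scong_top_occ by fastforce

lemma outp_iff_top_occ: "outp a P \<longleftrightarrow> top_occ (Out a) P > 0"
  unfolding outp_def using top_occ_split scong_top_occ by fastforce

lemma occ_le_occ_cfill: "occ \<alpha> Q \<le> occ \<alpha> (cfill C Q)"
  by (induction C) auto

lemma occ_split: "occ \<alpha> P > 0 \<Longrightarrow> \<exists>C X. P = cfill C (Pre \<alpha> X)"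
proof (induction P)
  case (Pre \<beta> P)
  show ?case
  proof (cases "\<alpha> = \<beta>")
    case True then show ?thesis by (metis cfill.simps(1))
  next
    case False
    then obtain C X where "P = cfill C (Pre \<alpha> X)" using Pre by auto
    then show ?thesis by (metis cfill.simps(4))
  qed
next
  case (Par P Q)
  show ?case
  proof (cases "occ \<alpha> P > 0")
    case True
    then obtain C X where "P = cfill C (Pre \<alpha> X)" using Par by auto
    then show ?thesis by (metis cfill.simps(3))
  next
    case False
    then have "occ \<alpha> Q > 0" using Par.prems by simp
    then obtain C X where "Q = cfill C (Pre \<alpha> X)" using Par by auto
    then show ?thesis by (metis cfill.simps(2))
  qed
qed simp

lemma nested_occ_iff_occ:
  "(\<exists>C Q. P \<equiv>\<^sub>s cfill C Q \<and> top_occ \<alpha> Q > 0) \<longleftrightarrow> occ \<alpha> P > 0"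
proof
  assume "\<exists>C Q. P \<equiv>\<^sub>s cfill C Q \<and> top_occ \<alpha> Q > 0"
  then obtain C Q where "P \<equiv>\<^sub>s cfill C Q" "top_occ \<alpha> Q > 0" by blast
  then show "occ \<alpha> P > 0"
    using top_occ_le_occ[of \<alpha> Q] occ_le_occ_cfill[of \<alpha> Q C] scong_occ by fastforce
next
  assume "occ \<alpha> P > 0"
  then obtain C X where "P = cfill C (Pre \<alpha> X)" using occ_split by blast
  then show "\<exists>C Q. P \<equiv>\<^sub>s cfill C Q \<and> top_occ \<alpha> Q > 0" using scong.refl by fastforce
qed

lemma cin_iff_occ: "cin a P \<longleftrightarrow> occ (In a) P > 0"
  unfolding cin_def inp_iff_top_occ by (rule nested_occ_iff_occ)

lemma cout_iff_occ: "cout a P \<longleftrightarrow> occ (Out a) P > 0"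
  unfolding cout_def outp_iff_top_occ by (rule nested_occ_iff_occ)

lemma tcomplete_if_complete: "complete P \<Longrightarrow> tcomplete P"
  unfolding complete_def tcomplete_def inp_iff_top_occ outp_iff_top_occ cin_iff_occ cout_iff_occ
  using top_occ_le_occ less_le_trans by (meson le_less)

fun ectx_proc :: "ectx \<Rightarrow> proc" where
  "ectx_proc EHole = Nil"
| "ectx_proc (EParL P E) = Par P (ectx_proc E)"
| "ectx_proc (EParR E P) = Par (ectx_proc E) P"

lemma efill_scong_Par: "efill E P \<equiv>\<^sub>s Par (ectx_proc E) P"
proof (induction E)
  case EHole then show ?case using scong_par_Nil_left scong.sym by simp
next
  case (EParL Q E)
  have "Par Q (efill E P) \<equiv>\<^sub>s Par Q (Par (ectx_proc E) P)" by (rule scong.cong_par[OF scong.refl EParL])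
  also have "\<dots> \<equiv>\<^sub>s Par (Par Q (ectx_proc E)) P" by (rule scong.par_assoc)
  finally show ?case by simp
next
  case (EParR E Q)
  have "Par (efill E P) Q \<equiv>\<^sub>s Par (Par (ectx_proc E) P) Q" by (rule scong.cong_par[OF EParR scong.refl])
  also have "\<dots> \<equiv>\<^sub>s Par Q (Par (ectx_proc E) P)" by (rule scong.par_comm)
  also have "\<dots> \<equiv>\<^sub>s Par (Par Q (ectx_proc E)) P" by (rule scong.par_assoc)
  also have "\<dots> \<equiv>\<^sub>s Par (Par (ectx_proc E) Q) P" by (rule scong.cong_par[OF scong.par_comm scong.refl])
  finally show ?case by simp
qed

lemma red_redex:
  assumes "red P Q"
  obtains b X Y Z where "P \<equiv>\<^sub>s Par Z (Par (Pre (In b) X) (Pre (Out b) Y))" "Q \<equiv>\<^sub>s Par Z (Par X Y)"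
proof -
  have "\<exists>b X Y Z. P \<equiv>\<^sub>s Par Z (Par (Pre (In b) X) (Pre (Out b) Y)) \<and> Q \<equiv>\<^sub>s Par Z (Par X Y)"
    using assms
  proof (induction rule: red.induct)
    case (comm a P Q)
    then show ?case using scong_par_Nil_left scong.sym by blast
  next
    case (ectx P P' E)
    then obtain b X Y Z where
      "P \<equiv>\<^sub>s Par Z (Par (Pre (In b) X) (Pre (Out b) Y))" "P' \<equiv>\<^sub>s Par Z (Par X Y)" by blast
    moreover have "efill E K \<equiv>\<^sub>s Par (Par (ectx_proc E) Z) W" if "K \<equiv>\<^sub>s Par Z W" for K W
    proof -
      have "efill E K \<equiv>\<^sub>s Par (ectx_proc E) K" by (rule efill_scong_Par)
      also have "\<dots> \<equiv>\<^sub>s Par (ectx_proc E) (Par Z W)" by (rule scong.cong_par[OF scong.refl that])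
      also have "\<dots> \<equiv>\<^sub>s Par (Par (ectx_proc E) Z) W" by (rule scong.par_assoc)
      finally show ?thesis .
    qed
    ultimately show ?case by blast
  next
    case (struct P P' Q' Q)
    then show ?case by (meson scong.sym scong.trans)
  qed
  then show thesis using that by blast
qed

lemma red_if_top_occ_In_Out:
  assumes "top_occ (In a) P > 0" "top_occ (Out a) P > 0"
  shows "\<exists>Q. red P Q"
proof -
  obtain P1 X where P: "P \<equiv>\<^sub>s Par P1 (Pre (In a) X)" using top_occ_split[OF assms(1)] by blast
  have "top_occ (Out a) P1 > 0" using assms(2) scong_top_occ[OF P, of "Out a"] by simp
  then obtain P2 Y where "P1 \<equiv>\<^sub>s Par P2 (Pre (Out a) Y)" using top_occ_split by blast
  then have "P \<equiv>\<^sub>s Par (Par P2 (Pre (Out a) Y)) (Pre (In a) X)"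
    using P scong.cong_par scong.refl scong.trans by blast
  also have "\<dots> \<equiv>\<^sub>s Par P2 (Par (Pre (Out a) Y) (Pre (In a) X))" by (rule scong.sym[OF scong.par_assoc])
  also have "\<dots> \<equiv>\<^sub>s efill (EParL P2 EHole) (Par (Pre (In a) X) (Pre (Out a) Y))"
    by (simp add: scong.cong_par scong.refl scong.par_comm)
  finally show ?thesis using red.struct[OF _ red.ectx[OF red.comm] scong.refl] by blast
qed

lemma red_occ:
  assumes "red R S"
  obtains b where "top_occ (In b) R > 0" "top_occ (Out b) R > 0"
    "\<And>\<alpha>. occ \<alpha> R = occ \<alpha> S + (if \<alpha> = In b \<or> \<alpha> = Out b then 1 else 0)"
proof -
  obtain b X Y Z where
    redex: "R \<equiv>\<^sub>s Par Z (Par (Pre (In b) X) (Pre (Out b) Y))" and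
    contractum: "S \<equiv>\<^sub>s Par Z (Par X Y)"
    using red_redex[OF assms] .
  show thesis
    by (rule that[of b]) (auto simp: scong_top_occ[OF redex] scong_occ[OF redex] scong_occ[OF contractum])
qed

lemma red_num_prefixes:
  assumes "red R S"
  shows "num_prefixes S < num_prefixes R"
proof -
  obtain b X Y Z where
    "R \<equiv>\<^sub>s Par Z (Par (Pre (In b) X) (Pre (Out b) Y))" "S \<equiv>\<^sub>s Par Z (Par X Y)"
    using red_redex[OF assms] .
  then show ?thesis by (auto dest!: scong_num_prefixes)
qed

lemma reds_to_normal_form: "\<exists>N. reds P N \<and> \<not> (\<exists>S. red N S)"
proof (induction "num_prefixes P" arbitrary: P rule: less_induct)
  case less
  show ?case
  proof (cases "\<exists>S. red P S")
    case True
    then obtain S where "red P S" by blast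
    moreover obtain N where "reds S N" "\<not> (\<exists>S'. red N S')"
      using less red_num_prefixes[OF \<open>red P S\<close>] by blast
    ultimately show ?thesis by (meson converse_rtranclp_into_rtranclp)
  qed blast
qed

lemma red_linear: "red R S \<Longrightarrow> linear R \<Longrightarrow> linear S"
  unfolding linear_def by (elim red_occ) (metis le_add1 order_trans)

lemma reds_linear: "reds R S \<Longrightarrow> linear R \<Longrightarrow> linear S"
  by (induction rule: rtranclp_induct) (auto intro: red_linear)

text \<open>By linearity the synchronising name disappears altogether, on both sides.\<close>
lemma red_complete:
  assumes "red R S" "linear R" "complete R"
  shows "complete S"
proof -
  obtain b where
    occ_R: "\<And>\<alpha>. occ \<alpha> R = occ \<alpha> S + (if \<alpha> = In b \<or> \<alpha> = Out b then 1 else 0)"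
    using red_occ[OF assms(1)] by blast
  have "occ (In b) R \<le> 1" "occ (Out b) R \<le> 1" using assms(2) unfolding linear_def by auto
  then have "occ (In b) S = 0" "occ (Out b) S = 0" using occ_R[of "In b"] occ_R[of "Out b"] by auto
  moreover have "occ (In a) S = occ (In a) R" "occ (Out a) S = occ (Out a) R" if "a \<noteq> b" for a
    using occ_R that by auto
  ultimately show ?thesis
    using assms(3) unfolding complete_def cin_iff_occ cout_iff_occ by metis
qed

lemma reds_linear_complete:
  "reds R S \<Longrightarrow> linear R \<Longrightarrow> complete R \<Longrightarrow> linear S \<and> complete S"
  by (induction rule: rtranclp_induct) (auto intro: red_linear red_complete)

text \<open>
  No partner of an action in \<open>T\<close> is then at top level, so no \<open>T\<close>-prefix can fire and the
  configuration is stable under reduction.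
\<close>
definition locked :: "act set \<Rightarrow> proc \<Rightarrow> bool" where
  "locked T R \<longleftrightarrow> (\<forall>\<alpha>\<in>T. top_occ \<alpha> R > 0 \<and> guarded_occ T (co \<alpha>) R = occ (co \<alpha>) R)"

lemma locked_no_top_partner: "locked T R \<Longrightarrow> \<alpha> \<in> T \<Longrightarrow> top_occ (co \<alpha>) R = 0"
  using top_occ_add_guarded_occ_le_occ[of "co \<alpha>" R T] unfolding locked_def by auto

lemma red_locked:
  assumes "locked T R" "red R S"
  shows "locked T S"
proof -
  obtain b X Y Z where
    redex: "R \<equiv>\<^sub>s Par Z (Par (Pre (In b) X) (Pre (Out b) Y))" and
    contractum: "S \<equiv>\<^sub>s Par Z (Par X Y)"
    using red_redex[OF assms(2)] .
  note counts = scong_occ[OF redex] scong_occ[OF contractum] scong_top_occ[OF redex]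
    scong_top_occ[OF contractum] scong_guarded_occ[OF redex] scong_guarded_occ[OF contractum]
  have "top_occ (In b) R > 0" "top_occ (Out b) R > 0" using counts by auto
  then have redex_not_locked: "In b \<notin> T" "Out b \<notin> T"
    using locked_no_top_partner[OF assms(1), of "In b"] locked_no_top_partner[OF assms(1), of "Out b"]
    by auto
  have partner_not_redex: "co \<alpha> \<noteq> In b" "co \<alpha> \<noteq> Out b" if "\<alpha> \<in> T" for \<alpha>
    using locked_no_top_partner[OF assms(1) that] \<open>top_occ (In b) R > 0\<close> \<open>top_occ (Out b) R > 0\<close>
    by auto
  show ?thesis
    unfolding locked_def
  proof
    fix \<alpha> assume "\<alpha> \<in> T"
    then have "top_occ \<alpha> R > 0" "guarded_occ T (co \<alpha>) R = occ (co \<alpha>) R"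
      using assms(1) unfolding locked_def by auto
    moreover have "\<alpha> \<noteq> In b" "\<alpha> \<noteq> Out b" using redex_not_locked \<open>\<alpha> \<in> T\<close> by auto
    ultimately show "top_occ \<alpha> S > 0 \<and> guarded_occ T (co \<alpha>) S = occ (co \<alpha>) S"
      using counts redex_not_locked partner_not_redex[OF \<open>\<alpha> \<in> T\<close>] by auto
  qed
qed

lemma reds_locked: "reds R S \<Longrightarrow> locked T R \<Longrightarrow> locked T S"
  by (induction rule: rtranclp_induct) (auto intro: red_locked)

lemma red_if_top_occ_co:
  assumes "top_occ \<alpha> Q > 0" "top_occ (co \<alpha>) Q > 0"
  shows "\<exists>Q'. red Q Q'"
  using assms red_if_top_occ_In_Out by (cases \<alpha>) auto

lemma tcomplete_occ_co:
  assumes "tcomplete Q" "top_occ \<alpha> Q > 0"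
  shows "occ (co \<alpha>) Q > 0"
  using assms unfolding tcomplete_def inp_iff_top_occ outp_iff_top_occ cin_iff_occ cout_iff_occ
  by (cases \<alpha>) auto

text \<open>Linearity forbids partners of the top-level actions of \<open>Q\<close> outside \<open>Q\<close>.\<close>
lemma sdl_locked:
  assumes "sdl Q" "linear (efill E Q)"
  shows "locked {\<alpha>. top_occ \<alpha> Q > 0} (efill E Q)"
  unfolding locked_def
proof (intro ballI conjI)
  let ?T = "{\<alpha>. top_occ \<alpha> Q > 0}"
  fix \<alpha> assume "\<alpha> \<in> ?T"
  then have top: "top_occ \<alpha> Q > 0" by simp
  note split = efill_scong_Par[of E Q]
  show "top_occ \<alpha> (efill E Q) > 0" using top scong_top_occ[OF split] by simp
  have no_top_partner: "top_occ (co \<alpha>) Q = 0"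
    using red_if_top_occ_co[OF top] assms(1) unfolding sdl_def dl_def by blast
  have "occ (co \<alpha>) Q > 0" using tcomplete_occ_co[OF _ top] assms(1) unfolding sdl_def by blast
  moreover have "occ (co \<alpha>) (efill E Q) \<le> 1" using assms(2) unfolding linear_def by (cases \<alpha>) auto
  ultimately have "occ (co \<alpha>) (ectx_proc E) = 0" using scong_occ[OF split, of "co \<alpha>"] by simp
  moreover have "guarded_occ ?T (co \<alpha>) Q = occ (co \<alpha>) Q"
    using top_occ_add_guarded_occ_eq_occ[of Q ?T "co \<alpha>"] no_top_partner by simp
  ultimately show "guarded_occ ?T (co \<alpha>) (efill E Q) = occ (co \<alpha>) (efill E Q)"
    using scong_occ[OF split] scong_guarded_occ[OF split] guarded_occ_le_occ[of ?T "co \<alpha>" "ectx_proc E"]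
    by simp
qed

lemma locked_wait_not_sync:
  assumes "locked T R" "\<alpha> \<in> T" "\<alpha> = In a \<or> \<alpha> = Out a"
  shows "wait a R \<and> \<not> sync a R"
  using assms locked_no_top_partner[OF assms(1,2)] unfolding locked_def wait_def sync_def
    inp_iff_top_occ outp_iff_top_occ by auto

lemma locked_not_lf:
  assumes "reds P R" "locked T R" "\<alpha> \<in> T"
  shows "\<not> lf P"
proof -
  obtain a where a: "\<alpha> = In a \<or> \<alpha> = Out a" by (cases \<alpha>) auto
  have "wait a R" using locked_wait_not_sync[OF assms(2,3) a] by blast
  moreover have "\<not> sync a R'" if "reds R R'" for R'
    using locked_wait_not_sync[OF reds_locked[OF that assms(2)] assms(3) a] by blast
  ultimately show ?thesis using assms(1) unfolding lf_def by blast
qed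

lemma psl_not_lf:
  assumes "linear P" "psl P"
  shows "\<not> lf P"
proof -
  obtain E Q where reach: "reds P (efill E Q)" and "sdl Q" using assms(2) unfolding psl_def by blast
  then have "locked {\<alpha>. top_occ \<alpha> Q > 0} (efill E Q)"
    using sdl_locked reds_linear[OF reach assms(1)] by blast
  moreover obtain \<alpha> where "top_occ \<alpha> Q > 0"
    using \<open>sdl Q\<close> scong_Nil_if_no_top_occ unfolding sdl_def dl_def by blast
  ultimately show ?thesis using locked_not_lf[OF reach] by blast
qed

lemma red_keeps_top_occ:
  assumes "red R S" "\<not> sync a R" "top_occ \<alpha> R > 0" "\<alpha> = In a \<or> \<alpha> = Out a"
  shows "top_occ \<alpha> S > 0"
proof -
  obtain b X Y Z where
    redex: "R \<equiv>\<^sub>s Par Z (Par (Pre (In b) X) (Pre (Out b) Y))" and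
    contractum: "S \<equiv>\<^sub>s Par Z (Par X Y)"
    using red_redex[OF assms(1)] .
  have "b \<noteq> a"
    using assms(2) scong_top_occ[OF redex] unfolding sync_def inp_iff_top_occ outp_iff_top_occ by auto
  then show ?thesis using assms(3,4) scong_top_occ[OF redex] scong_top_occ[OF contractum] by auto
qed

lemma not_lf_psl:
  assumes "linear P" "complete P" "\<not> lf P"
  shows "psl P"
proof -
  obtain Q a where reach: "reds P Q" and "wait a Q" and never_sync: "\<And>R. reds Q R \<Longrightarrow> \<not> sync a R"
    using assms(3) unfolding lf_def by blast
  then obtain \<alpha> where \<alpha>: "\<alpha> = In a \<or> \<alpha> = Out a" "top_occ \<alpha> Q > 0"
    unfolding wait_def inp_iff_top_occ outp_iff_top_occ by auto
  have stays_top: "top_occ \<alpha> R > 0" if "reds Q R" for R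
    using that
  proof (induction rule: rtranclp_induct)
    case (step R S)
    then show ?case using red_keeps_top_occ never_sync \<alpha>(1) by blast
  qed (rule \<alpha>(2))
  obtain N where "reds Q N" and normal: "\<not> (\<exists>S. red N S)" using reds_to_normal_form by blast
  then have "reds P N" using reach by simp
  have "\<not> N \<equiv>\<^sub>s Nil" using stays_top[OF \<open>reds Q N\<close>] scong_top_occ[of N Nil \<alpha>] by auto
  moreover have "tcomplete N"
    using tcomplete_if_complete reds_linear_complete[OF \<open>reds P N\<close> assms(1,2)] by blast
  ultimately have "sdl N" using normal unfolding sdl_def dl_def by blast
  then show ?thesis using \<open>reds P N\<close> unfolding psl_def by (metis efill.simps(1))
qed

theorem theorem1:
  shows "PSL = CMP - LF"
  unfolding PSL_def LF_def CMP_def using psl_not_lf not_lf_psl by blast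

end
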